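(* Let $Q$ be the transition matrix of a Markov chain on a countable state space that is reversible with respect to a positive measure $\pi$. If $\pi$ is finite, assume $\pi$ is normalized to be a probability measure. Assume that $$c:=\inf\{\pi(x)Q(x,y): x\ne y,\ Q(x,y)>0\}>0 \quad\text{and}\quad a:=\inf_x Q(x,x)>0.$$ Then for all states $x$ and all $k\ge0$: - if $\pi$ is finite, $\left|\frac{Q^k(x,x)}{\pi(x)}-1\right|\le\min\Bigl\{\frac{1}{ac\sqrt{k+1}},\ \frac{1}{2a^2c^2(k+1)}\Bigr\}$; - if $\pi$ is infinite, $\frac{Q^k(x,x)}{\pi(x)}\le\frac{1}{ac\sqrt{k+1}}$. *)

theory Defs
  imports "HOL-Analysis.Analysis"
begin

primrec Qpow :: "('a \<Rightarrow> 'a \<Rightarrow> real) \<Rightarrow> nat \<Rightarrow> 'a \<Rightarrow> 'a \<Rightarrow> real" where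
  "Qpow Q 0 x y = (if x = y then 1 else 0)"
| "Qpow Q (Suc k) x y = (\<Sum>\<^sub>\<infinity>z. Q x z * Qpow Q k z y)"

definition transition_matrix :: "('a \<Rightarrow> 'a \<Rightarrow> real) \<Rightarrow> bool" where
  "transition_matrix Q \<longleftrightarrow> (\<forall>x y. Q x y \<ge> 0) \<and> (\<forall>x. ((\<lambda>y. Q x y) has_sum 1) UNIV)"

definition reversible :: "('a \<Rightarrow> 'a \<Rightarrow> real) \<Rightarrow> ('a \<Rightarrow> real) \<Rightarrow> bool" where
  "reversible Q \<pi> \<longleftrightarrow> (\<forall>x y. \<pi> x * Q x y = \<pi> y * Q y x)"

definition irreducible_chain :: "('a \<Rightarrow> 'a \<Rightarrow> real) \<Rightarrow> bool" where
  "irreducible_chain Q \<longleftrightarrow> (\<forall>x y. \<exists>k. Qpow Q k x y > 0)"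

end

theory Submission
  imports Defs "HOL-Library.Transitive_Closure_Table"
begin

text \<open>Weighted by \<open>\<pi>\<close>, reversibility makes \<open>Q\<close> self-adjoint, so \<open>Q\<^sup>k(x,x)/\<pi>(x)\<close> is an
  inner product of the heat kernels \<open>h\<^sub>j = Q\<^sup>j(\<cdot>,x)/\<pi>(x)\<close> and is bounded by \<open>N\<^sub>j = \<parallel>h\<^sub>j\<parallel>\<^sup>2\<close>,
  \<open>j = \<lfloor>k/2\<rfloor>\<close>. Laziness gives the energy inequality \<open>N\<^sub>j\<^sub>+\<^sub>1 \<le> N\<^sub>j - a \<E>(h\<^sub>j)\<close> with \<open>\<E>\<close>
  the Dirichlet form. To bound \<open>\<E>(h\<^sub>j)\<close> from below, follow a path from a maximum point of
  \<open>h\<^sub>j\<close> to a point where \<open>h\<^sub>j\<close> is at most a third of its maximum: every edge has weight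
  \<open>\<pi>(y) Q(y,z) \<ge> c\<close>, and every state has \<open>\<pi>\<close>-mass at least \<open>c/(1 - a)\<close>, so the path is short.
  This gives \<open>N\<^sub>j\<^sub>+\<^sub>1 \<le> N\<^sub>j - \<alpha> N\<^sub>j\<^sup>3\<close>, hence \<open>N\<^sub>j = O(1/\<surd>j)\<close>. When \<open>\<pi>\<close> is a probability
  measure, the same path argument applied to the variance \<open>N\<^sub>j - 1\<close> gives
  \<open>N\<^sub>j\<^sub>+\<^sub>1 - 1 \<le> (N\<^sub>j - 1) - \<beta> (N\<^sub>j - 1)\<^sup>2\<close>, hence \<open>N\<^sub>j - 1 = O(1/j)\<close>.\<close>

lemma sum_weighted_square_le:
  fixes q f :: "'a \<Rightarrow> real"
  assumes C: "finite C" "y \<in> C" and q: "\<And>z. q z \<ge> 0" "sum q C \<le> 1"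
  shows "(\<Sum>z\<in>C. q z * f z)^2
           \<le> (\<Sum>z\<in>C. q z * (f z)^2) - q y * (\<Sum>w\<in>C. q w * (f y - f w)^2)"
proof -
  define g where "g z w = q z * q w * (f z - f w)^2" for z w
  define T where "T = (\<Sum>z\<in>C. q z * (f z)^2)"
  have g_nonneg: "g z w \<ge> 0" for z w using q by (simp add: g_def)
  have g_commute: "g z w = g w z" for z w by (simp add: g_def power2_commute)
  have "(\<Sum>z\<in>C. \<Sum>w\<in>C. g z w) = (\<Sum>z\<in>C. \<Sum>w\<in>C.
          (q z * (f z)^2) * q w + q z * (q w * (f w)^2) - 2 * ((q z * f z) * (q w * f w)))"
    unfolding g_def by (intro sum.cong refl) (simp add: power2_eq_square algebra_simps)
  also have "\<dots> = T * sum q C + sum q C * T - 2 * ((\<Sum>z\<in>C. q z * f z) * (\<Sum>z\<in>C. q z * f z))"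
    unfolding T_def sum_product by (simp add: sum.distrib sum_subtractf sum_distrib_left)
  also have "\<dots> = 2 * sum q C * T - 2 * (\<Sum>z\<in>C. q z * f z)^2"
    by (simp add: power2_eq_square)
  finally have "(\<Sum>z\<in>C. \<Sum>w\<in>C. g z w) = 2 * sum q C * T - 2 * (\<Sum>z\<in>C. q z * f z)^2" .
  moreover have "(\<Sum>z\<in>C. \<Sum>w\<in>C. g z w) \<ge> 2 * (\<Sum>w\<in>C. g y w)"
  proof -
    have "(\<Sum>z\<in>C - {y}. g z y) \<le> (\<Sum>z\<in>C - {y}. \<Sum>w\<in>C. g z w)"
      using C g_nonneg by (intro sum_mono member_le_sum) auto
    moreover have "(\<Sum>z\<in>C - {y}. g z y) = (\<Sum>z\<in>C. g z y)"
      using sum.remove[OF C, of "\<lambda>z. g z y"] by (simp add: g_def)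
    moreover have "(\<Sum>z\<in>C. g z y) = (\<Sum>w\<in>C. g y w)"
      using g_commute by simp
    ultimately show ?thesis using sum.remove[OF C, of "\<lambda>z. \<Sum>w\<in>C. g z w"] by linarith
  qed
  moreover have "sum q C * T \<le> T"
    using q by (intro mult_left_le_one_le) (auto simp: T_def intro: sum_nonneg)
  moreover have "(\<Sum>w\<in>C. g y w) = q y * (\<Sum>w\<in>C. q w * (f y - f w)^2)"
    by (simp add: g_def sum_distrib_left mult_ac)
  ultimately show ?thesis
    unfolding T_def by linarith
qed

lemma square_add_le:
  fixes d e L E :: real
  assumes "0 \<le> L" "0 \<le> E" "e^2 \<le> L * E"
  shows "(d + e)^2 \<le> (L + 1) * (d^2 + E)"
proof (cases "L = 0")
  case True
  with assms show ?thesis by simp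
next
  case False
  have "L * (d + e)^2 = L * (L + 1) * d^2 + (L + 1) * e^2 - (L * d - e)^2"
    by (simp add: power2_eq_square algebra_simps)
  also have "\<dots> \<le> L * (L + 1) * d^2 + (L + 1) * (L * E)"
    using assms mult_left_mono[OF assms(3), of "L + 1"] by (smt (verit) zero_le_power2)
  also have "\<dots> = L * ((L + 1) * (d^2 + E))"
    by (simp add: algebra_simps)
  finally show ?thesis using assms False by simp
qed

lemma square_telescope_le:
  fixes f :: "'a \<Rightarrow> real"
  shows "(f y - f (last (y # ws)))^2 \<le> length ws * (\<Sum>(v, w)\<leftarrow>zip (y # ws) ws. (f v - f w)^2)"
proof (induction ws arbitrary: y)
  case Nil
  then show ?case by simp
next
  case (Cons w ws)
  have "(f y - f w + (f w - f (last (w # ws))))^2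
          \<le> (real (length ws) + 1) * ((f y - f w)^2 + (\<Sum>(v, w)\<leftarrow>zip (w # ws) ws. (f v - f w)^2))"
    using Cons.IH by (intro square_add_le sum_list_nonneg) auto
  then show ?case by (simp add: add.commute)
qed

lemma mult_one_minus_le_quarter: "(x::real) * (1 - x) \<le> 1 / 4"
proof -
  have "0 \<le> (2 * x - 1)^2"
    by simp
  then show ?thesis
    by (simp add: power2_eq_square algebra_simps)
qed

lemma cubic_decrease_inverse_square:
  fixes n :: "nat \<Rightarrow> real"
  assumes "\<alpha> > 0" and n_pos: "\<And>j. n j > 0"
    and step: "\<And>j. j < k \<Longrightarrow> n (Suc j) \<le> n j - \<alpha> * (n j)^3"
  shows "2 * \<alpha> * k \<le> 1 / (n k)^2"
  using step
proof (induction k)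
  case 0
  then show ?case by simp
next
  case (Suc k)
  define x where "x = \<alpha> * (n k)^2"
  have x: "0 \<le> x" "x < 1"
  proof -
    have "0 < n k * (1 - x)"
      using Suc.prems[of k] n_pos[of "Suc k"] by (simp add: x_def power2_eq_square power3_eq_cube algebra_simps)
    then show "x < 1" using n_pos[of k] by (simp add: zero_less_mult_iff)
  qed (use \<open>\<alpha> > 0\<close> in \<open>simp add: x_def\<close>)
  have "(1 + 2 * x) * (n (Suc k))^2 \<le> (1 + 2 * x) * (n k * (1 - x))^2"
    using Suc.prems[of k] n_pos[of "Suc k"] x
    by (intro mult_left_mono power_mono) (simp_all add: x_def power2_eq_square power3_eq_cube algebra_simps)
  also have "\<dots> = (n k)^2 * (1 - x^2 * (3 - 2 * x))"
    by (simp add: power2_eq_square algebra_simps)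
  also have "\<dots> \<le> (n k)^2"
    using x by (simp add: mult_left_le)
  finally have "(1 + 2 * x) / (n k)^2 \<le> 1 / (n (Suc k))^2"
    using n_pos[of k] n_pos[of "Suc k"] by (simp add: divide_simps)
  moreover have "(1 + 2 * x) / (n k)^2 = 1 / (n k)^2 + 2 * \<alpha>"
    using n_pos[of k] by (simp add: x_def field_simps)
  ultimately show ?case
    using Suc by (simp add: algebra_simps)
qed

lemma quadratic_decrease_inverse:
  fixes G :: "nat \<Rightarrow> real"
  assumes "\<beta> \<ge> 0" "\<gamma> > 0" and G_nonneg: "\<And>j. G j \<ge> 0"
    and step: "\<And>j. G (Suc j) \<le> G j - \<beta> * (G j)^2" and "G 0 * \<gamma> \<le> 1"
  shows "G k * (\<gamma> + \<beta> * k) \<le> 1"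
proof (induction k)
  case 0
  then show ?case using assms by simp
next
  case (Suc k)
  define s where "s = \<gamma> + \<beta> * k"
  define y where "y = \<beta> * G k"
  have step': "G (Suc k) \<le> G k * (1 - y)"
    using step[of k] by (simp add: y_def power2_eq_square algebra_simps)
  show ?case
  proof (cases "G (Suc k) = 0")
    case False
    then have "0 < G k * (1 - y)"
      using G_nonneg[of "Suc k"] step' by linarith
    then have "y \<le> 1"
      using G_nonneg[of k] by (simp add: zero_less_mult_iff)
    have "G (Suc k) * (s + \<beta>) \<le> G k * (1 - y) * (s + \<beta>)"
      using step' assms by (intro mult_right_mono) (auto simp: s_def)
    also have "\<dots> = (1 - y) * (G k * s + y)"
      by (simp add: y_def algebra_simps)
    also have "\<dots> \<le> (1 - y) * (1 + y)"
      using Suc.IH \<open>y \<le> 1\<close> by (intro mult_left_mono) (auto simp: s_def)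
    also have "\<dots> \<le> 1"
      by (simp add: algebra_simps)
    finally show ?thesis
      by (simp add: s_def algebra_simps)
  qed simp
qed

lemma finite_if_summable_on_bounded_below:
  fixes f :: "'a \<Rightarrow> real"
  assumes "f summable_on A" "\<delta> > 0" "\<And>x. x \<in> A \<Longrightarrow> \<delta> \<le> f x"
  shows "finite A"
proof (rule ccontr)
  assume "infinite A"
  obtain n :: nat where n: "infsum f A < n * \<delta>"
    using reals_Archimedean3[OF assms(2)] by blast
  obtain F where F: "F \<subseteq> A" "finite F" "card F = n"
    using infinite_arbitrarily_large[OF \<open>infinite A\<close>] by blast
  have "n * \<delta> \<le> sum f F"
    using F assms(3) sum_bounded_below[of F \<delta> f] by auto
  also have "\<dots> \<le> infsum f A"
  proof -
    have "0 \<le> f x" if "x \<in> A" for x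
      using assms(2) assms(3)[OF that] by linarith
    then show ?thesis
      using infsum_mono_neutral[OF summable_on_finite[OF F(2)] assms(1), of f] F by auto
  qed
  finally show False
    using n by simp
qed

lemma rtranclp_exit_path:
  assumes "r\<^sup>*\<^sup>* y z" "y \<in> S" "z \<notin> S"
  obtains ws w where "rtrancl_path r y (ws @ [w]) w" "distinct (y # ws @ [w])"
    "set (y # ws) \<subseteq> S" "w \<notin> S"
proof -
  obtain xs where "rtrancl_path r y xs z"
    using assms(1) rtranclp_eq_rtrancl_path by metis
  then obtain xs' where path: "rtrancl_path r y xs' z" and dist: "distinct (y # xs')"
    by (rule rtrancl_path_distinct)
  have "xs' \<noteq> []"
    using path assms(2,3) by (auto elim: rtrancl_path.cases)
  then have "z \<in> set xs'"
    using rtrancl_path_last[OF path] last_in_set by metis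
  then obtain ws w rest where split: "xs' = ws @ w # rest" "w \<notin> S" "\<forall>v\<in>set ws. v \<in> S"
    using assms(3) split_list_first_prop[of xs' "\<lambda>v. v \<notin> S"] by blast
  show thesis
  proof
    show "rtrancl_path r y (ws @ [w]) w"
      using path unfolding split(1) by (rule rtrancl_path_appendE)
    show "distinct (y # ws @ [w])" "set (y # ws) \<subseteq> S" "w \<notin> S"
      using dist split assms(2) by auto
  qed
qed

lemma Qpow_nonneg:
  assumes "transition_matrix Q"
  shows "Qpow Q k x y \<ge> 0"
  using assms by (induction k arbitrary: x) (auto simp: transition_matrix_def intro: infsum_nonneg)

lemma Qpow_pos_imp_rtranclp:
  assumes "transition_matrix Q" and "Qpow Q k x y > 0"
  shows "(\<lambda>v w. Q v w > 0)\<^sup>*\<^sup>* x y"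
  using assms(2)
proof (induction k arbitrary: x)
  case 0
  then show ?case by (simp split: if_splits)
next
  case (Suc k)
  then have "(\<Sum>\<^sub>\<infinity>z. Q x z * Qpow Q k z y) \<noteq> 0"
    by simp
  then obtain z where "Q x z * Qpow Q k z y \<noteq> 0"
    using infsum_0[of UNIV "\<lambda>z. Q x z * Qpow Q k z y"] by blast
  moreover have "Q x z \<ge> 0" "Qpow Q k z y \<ge> 0"
    using assms(1) Qpow_nonneg[OF assms(1)] by (auto simp: transition_matrix_def)
  ultimately have "Q x z > 0" "Qpow Q k z y > 0"
    by (auto simp: less_le)
  then show ?case
    using Suc.IH converse_rtranclp_into_rtranclp[of "\<lambda>v w. Q v w > 0"] by blast
qed

lemma Qpow_single_state:
  assumes "transition_matrix Q" and UNIV_eq: "UNIV = {x}"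
  shows "Qpow Q k x x = 1"
proof -
  have sum_eq: "(\<Sum>\<^sub>\<infinity>z. g z) = g x" for g :: "'a \<Rightarrow> real"
    by (subst UNIV_eq) simp
  have "Q x x = 1"
  proof -
    have "(Q x has_sum 1) UNIV"
      using assms(1) by (simp add: transition_matrix_def)
    then show ?thesis
      using infsumI sum_eq[of "Q x"] by metis
  qed
  then show ?thesis
    by (induction k) (simp_all add: sum_eq)
qed

section \<open>Reversible chains with edge weights bounded below\<close>

abbreviation supp :: "('a \<Rightarrow> real) \<Rightarrow> 'a set" where
  "supp f \<equiv> support_on UNIV f"

lemma exists_max_finite_supp:
  fixes f :: "'a \<Rightarrow> real"
  assumes "finite (supp f)"
  obtains y0 where "\<And>y. f y \<le> f y0"
proof -
  have "range f \<subseteq> insert 0 (f ` supp f)"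
    by (auto simp: in_support_on)
  then have "finite (range f)"
    using assms finite_subset by blast
  then have "Max (range f) \<in> range f"
    by (intro Max_in) auto
  then obtain y0 where "f y0 = Max (range f)"
    by (metis imageE)
  with \<open>finite (range f)\<close> show thesis
    by (intro that[of y0]) simp
qed

locale reversible_chain =
  fixes Q :: "'a \<Rightarrow> 'a \<Rightarrow> real" and \<pi> :: "'a \<Rightarrow> real" and c :: real
  assumes transition: "transition_matrix Q"
    and reversible: "reversible Q \<pi>"
    and pi_pos: "\<And>x. \<pi> x > 0"
    and c_pos: "c > 0"
    and conductance_ge: "\<And>x y. x \<noteq> y \<Longrightarrow> Q x y > 0 \<Longrightarrow> c \<le> \<pi> x * Q x y"
begin

lemma Q_nonneg: "Q x y \<ge> 0"
  using transition by (simp add: transition_matrix_def)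

lemma row_has_sum: "(Q x has_sum 1) UNIV"
  using transition by (simp add: transition_matrix_def)

lemma detailed_balance: "\<pi> x * Q x y = \<pi> y * Q y x"
  using reversible by (simp add: reversible_def)

lemma Q_pos_commute: "Q x y > 0 \<longleftrightarrow> Q y x > 0"
proof -
  have "Q x y > 0 \<longleftrightarrow> \<pi> x * Q x y > 0" "Q y x > 0 \<longleftrightarrow> \<pi> y * Q y x > 0"
    using pi_pos[of x] pi_pos[of y] by (simp_all add: zero_less_mult_iff)
  then show ?thesis
    using detailed_balance[of x y] by simp
qed

lemma Q_nonzero_commute: "Q x y \<noteq> 0 \<longleftrightarrow> Q y x \<noteq> 0"
  using Q_pos_commute[of x y] Q_nonneg[of x y] Q_nonneg[of y x] by linarith

lemma row_sum_le_1: "finite F \<Longrightarrow> sum (Q x) F \<le> 1"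
  using Q_nonneg by (intro has_sum_mono_neutral[OF has_sum_finite row_has_sum]) auto

lemma finite_row_support: "finite {y. Q x y \<noteq> 0}"
proof -
  let ?N = "{y. y \<noteq> x \<and> Q x y > 0}"
  have card_le: "card F * (c / \<pi> x) \<le> 1" if "F \<subseteq> ?N" "finite F" for F
  proof -
    have "(\<Sum>y\<in>F. c / \<pi> x) \<le> sum (Q x) F"
    proof (rule sum_mono)
      fix y assume "y \<in> F"
      then have "c \<le> \<pi> x * Q x y"
        using that(1) by (intro conductance_ge) auto
      then show "c / \<pi> x \<le> Q x y"
        using pi_pos[of x] by (simp add: divide_le_eq mult.commute)
    qed
    then show ?thesis
      using row_sum_le_1[OF \<open>finite F\<close>, of x] by simp
  qed
  have "finite ?N"
  proof (rule ccontr)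
    assume "infinite ?N"
    have "c / \<pi> x > 0"
      using c_pos pi_pos[of x] by simp
    then obtain n :: nat where n: "1 < n * (c / \<pi> x)"
      using reals_Archimedean3 by blast
    obtain F where F: "F \<subseteq> ?N" "finite F" "card F = n"
      using infinite_arbitrarily_large[OF \<open>infinite ?N\<close>] by blast
    have "n * (c / \<pi> x) \<le> 1"
      using card_le[OF F(1,2)] F(3) by simp
    then show False
      using n by simp
  qed
  moreover have "{y. Q x y \<noteq> 0} \<subseteq> insert x ?N"
    using Q_nonneg[of x] less_eq_real_def by auto
  ultimately show ?thesis
    using finite_subset by blast
qed

definition Qop :: "('a \<Rightarrow> real) \<Rightarrow> 'a \<Rightarrow> real" where
  "Qop f x = (\<Sum>\<^sub>\<infinity>y. Q x y * f y)"

lemma Qop_eq_sum: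
  assumes "finite A" and "\<And>y. y \<notin> A \<Longrightarrow> Q x y * f y = 0"
  shows "Qop f x = (\<Sum>y\<in>A. Q x y * f y)"
  unfolding Qop_def using assms by (subst infsum_cong_neutral[of A]) auto

lemma Qop_one: "Qop (\<lambda>_. 1) = (\<lambda>_. 1)"
  using row_has_sum by (auto simp: Qop_def infsumI)

definition nbhd :: "'a set \<Rightarrow> 'a set" where
  "nbhd A = A \<union> {y. \<exists>x\<in>A. Q x y \<noteq> 0}"

lemma subset_nbhd: "A \<subseteq> nbhd A"
  by (auto simp: nbhd_def)

lemma nbhd_mono: "A \<subseteq> B \<Longrightarrow> nbhd A \<subseteq> nbhd B"
  by (auto simp: nbhd_def)

lemma finite_nbhd: "finite A \<Longrightarrow> finite (nbhd A)"
proof -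
  assume "finite A"
  moreover have "{y. \<exists>x\<in>A. Q x y \<noteq> 0} = (\<Union>x\<in>A. {y. Q x y \<noteq> 0})"
    by auto
  ultimately show ?thesis
    using finite_row_support by (simp add: nbhd_def)
qed

lemma supp_Qop_subset: "finite (supp f) \<Longrightarrow> supp (Qop f) \<subseteq> nbhd (supp f)"
proof
  fix x assume "finite (supp f)" and "x \<in> supp (Qop f)"
  moreover have "Qop f x = (\<Sum>y\<in>supp f. Q x y * f y)"
    using \<open>finite (supp f)\<close> by (rule Qop_eq_sum) (simp add: in_support_on)
  ultimately have "(\<Sum>y\<in>supp f. Q x y * f y) \<noteq> 0"
    by (simp add: in_support_on)
  then obtain y where "y \<in> supp f" "Q x y \<noteq> 0"
    using sum.not_neutral_contains_not_neutral by force
  then show "x \<in> nbhd (supp f)"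
    using Q_nonzero_commute by (auto simp: nbhd_def)
qed

lemma finite_supp_Qop: "finite (supp f) \<Longrightarrow> finite (supp (Qop f))"
  using supp_Qop_subset finite_nbhd by (rule finite_subset)

text \<open>Meant for finitely supported \<open>f\<close>: over an infinite support the finite sum is \<open>0\<close>.\<close>
definition inner_pi :: "('a \<Rightarrow> real) \<Rightarrow> ('a \<Rightarrow> real) \<Rightarrow> real" where
  "inner_pi f g = (\<Sum>y\<in>supp f. \<pi> y * f y * g y)"

lemma inner_pi_eq_sum:
  "finite C \<Longrightarrow> supp f \<subseteq> C \<Longrightarrow> inner_pi f g = (\<Sum>y\<in>C. \<pi> y * f y * g y)"
  unfolding inner_pi_def by (rule sum.mono_neutral_left) (auto simp: in_support_on)

lemma inner_pi_self_nonneg: "inner_pi f f \<ge> 0"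
  unfolding inner_pi_def using pi_pos by (intro sum_nonneg) (simp add: mult.assoc less_imp_le)

lemma inner_pi_self_pos:
  assumes "finite (supp f)" "f y \<noteq> 0"
  shows "inner_pi f f > 0"
proof -
  have "0 < (f y)^2"
    using assms(2) by simp
  then have "0 < \<pi> y * f y * f y"
    using pi_pos[of y] by (simp add: power2_eq_square mult.assoc)
  also have "\<dots> \<le> inner_pi f f"
    unfolding inner_pi_def using assms pi_pos
    by (intro member_le_sum) (auto simp: in_support_on mult.assoc less_imp_le)
  finally show ?thesis .
qed

lemma two_inner_pi_le:
  assumes "finite (supp f)" "finite (supp g)"
  shows "2 * inner_pi f g \<le> inner_pi f f + inner_pi g g"
proof -
  let ?C = "supp f \<union> supp g"
  have "(\<Sum>y\<in>?C. 2 * (\<pi> y * f y * g y)) \<le> (\<Sum>y\<in>?C. \<pi> y * f y * f y + \<pi> y * g y * g y)"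
  proof (rule sum_mono)
    fix y
    have "0 \<le> \<pi> y * (f y - g y)^2"
      using pi_pos[of y] by simp
    then show "2 * (\<pi> y * f y * g y) \<le> \<pi> y * f y * f y + \<pi> y * g y * g y"
      by (simp add: power2_eq_square algebra_simps)
  qed
  then show ?thesis
    using assms by (simp add: inner_pi_eq_sum[of ?C] sum_distrib_left sum.distrib)
qed

lemma abs_inner_pi_le:
  assumes "finite (supp f)" "finite (supp g)"
  shows "\<bar>inner_pi f g\<bar> \<le> (inner_pi f f + inner_pi g g) / 2"
proof -
  have "supp (\<lambda>y. - g y) = supp g"
    by (auto simp: in_support_on)
  then have "2 * inner_pi f (\<lambda>y. - g y) \<le> inner_pi f f + inner_pi (\<lambda>y. - g y) (\<lambda>y. - g y)"
    using assms by (intro two_inner_pi_le) auto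
  moreover have "inner_pi f (\<lambda>y. - g y) = - inner_pi f g"
    by (simp add: inner_pi_def sum_negf)
  moreover have "inner_pi (\<lambda>y. - g y) (\<lambda>y. - g y) = inner_pi g g"
    using \<open>supp (\<lambda>y. - g y) = supp g\<close> by (simp add: inner_pi_def)
  ultimately show ?thesis
    using two_inner_pi_le[OF assms] by (simp add: abs_le_iff)
qed

lemma inner_pi_Qop:
  assumes "finite (supp f)"
  shows "inner_pi (Qop f) g = inner_pi f (Qop g)"
proof -
  let ?A = "supp f" and ?C = "nbhd (supp f)"
  have C: "finite ?C"
    using assms by (rule finite_nbhd)
  have Qf: "Qop f y = (\<Sum>z\<in>?A. Q y z * f z)" for y
    using assms by (rule Qop_eq_sum) (simp add: in_support_on)
  have Qg: "Qop g z = (\<Sum>y\<in>?C. Q z y * g y)" if "z \<in> ?A" for z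
  proof (rule Qop_eq_sum[OF C])
    fix y assume "y \<notin> ?C"
    then have "Q z y = 0"
      using that by (auto simp: nbhd_def)
    then show "Q z y * g y = 0" by simp
  qed
  have "inner_pi (Qop f) g = (\<Sum>y\<in>?C. \<Sum>z\<in>?A. (\<pi> y * Q y z) * f z * g y)"
    using inner_pi_eq_sum[OF C supp_Qop_subset[OF assms]]
    by (simp add: Qf sum_distrib_left sum_distrib_right mult_ac)
  also have "\<dots> = (\<Sum>z\<in>?A. \<Sum>y\<in>?C. (\<pi> z * Q z y) * f z * g y)"
    by (subst sum.swap) (simp add: detailed_balance)
  also have "\<dots> = inner_pi f (Qop g)"
    by (simp add: inner_pi_def Qg sum_distrib_left mult_ac)
  finally show ?thesis .
qed

definition mass :: "('a \<Rightarrow> real) \<Rightarrow> real" where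
  "mass f = inner_pi f (\<lambda>_. 1)"

lemma mass_Qop: "finite (supp f) \<Longrightarrow> mass (Qop f) = mass f"
  by (simp add: mass_def inner_pi_Qop Qop_one)

lemma mass_nonzero: "mass f = 1 \<Longrightarrow> \<exists>y. f y \<noteq> 0"
  by (rule ccontr) (simp add: mass_def inner_pi_def)

lemma inner_pi_le_mass:
  assumes "\<And>y. 0 \<le> f y" "\<And>y. f y \<le> M"
  shows "inner_pi f f \<le> M * mass f"
  unfolding mass_def inner_pi_def sum_distrib_left
proof (rule sum_mono)
  fix y
  have "\<pi> y * f y * f y \<le> \<pi> y * f y * M"
    using assms pi_pos[of y] by (intro mult_left_mono) (auto simp: less_imp_le)
  then show "\<pi> y * f y * f y \<le> M * (\<pi> y * f y * 1)"
    by (simp add: mult_ac)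
qed

lemma sum_pi_le_mass:
  assumes "finite (supp f)" "\<And>y. f y \<ge> 0" "S \<subseteq> supp f"
  shows "(\<Sum>y\<in>S. \<pi> y * f y) \<le> mass f"
  unfolding mass_def inner_pi_def using assms pi_pos
  by (simp, intro sum_mono2) (auto simp: less_imp_le)

text \<open>\<open>heat x k\<close> is the density of the law at time \<open>k\<close> of the chain started at \<open>x\<close> with respect
  to \<open>\<pi>\<close>, since \<open>Q\<^sup>k(y,x)/\<pi>(x) = Q\<^sup>k(x,y)/\<pi>(y)\<close> by reversibility.\<close>
definition heat :: "'a \<Rightarrow> nat \<Rightarrow> 'a \<Rightarrow> real" where
  "heat x k y = Qpow Q k y x / \<pi> x"

lemma heat_0: "heat x 0 = (\<lambda>y. if y = x then 1 / \<pi> x else 0)"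
  by (auto simp: heat_def)

lemma heat_Suc: "heat x (Suc k) = Qop (heat x k)"
  by (auto simp: heat_def Qop_def infsum_cmult_left'[symmetric] divide_inverse mult.assoc)

lemma heat_nonneg: "heat x k y \<ge> 0"
  using Qpow_nonneg[OF transition] pi_pos[of x] by (simp add: heat_def)

lemma finite_supp_heat: "finite (supp (heat x k))"
proof (induction k)
  case 0
  have "supp (heat x 0) \<subseteq> {x}"
    by (auto simp: heat_0 in_support_on split: if_splits)
  then show ?case
    using finite_subset by blast
qed (simp add: heat_Suc finite_supp_Qop)

lemma mass_heat: "mass (heat x k) = 1"
proof (induction k)
  case 0
  have "mass (heat x 0) = (\<Sum>y\<in>{x}. \<pi> y * heat x 0 y * 1)"
    unfolding mass_def by (rule inner_pi_eq_sum) (auto simp: heat_0 in_support_on split: if_splits)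
  then show ?case
    using pi_pos[of x] by (simp add: heat_0)
qed (simp add: heat_Suc mass_Qop finite_supp_heat)

lemma inner_pi_heat: "inner_pi (heat x j) (heat x l) = Qpow Q (j + l) x x / \<pi> x"
proof (induction j arbitrary: l)
  case 0
  have "inner_pi (heat x 0) (heat x l) = (\<Sum>y\<in>{x}. \<pi> y * heat x 0 y * heat x l y)"
    by (rule inner_pi_eq_sum) (auto simp: heat_0 in_support_on split: if_splits)
  also have "\<dots> = heat x l x"
    using pi_pos[of x] by (simp add: heat_0)
  finally show ?case
    by (simp add: heat_def[of x l x])
next
  case (Suc j)
  have "inner_pi (heat x (Suc j)) (heat x l) = inner_pi (heat x j) (heat x (Suc l))"
    by (simp only: heat_Suc inner_pi_Qop[OF finite_supp_heat])
  then show ?case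
    using Suc.IH[of "Suc l"] by simp
qed

end

section \<open>Lazy irreducible chains: the Nash inequality\<close>

locale lazy_irreducible_chain = reversible_chain +
  fixes a :: real
  assumes a_pos: "a > 0"
    and holding_ge: "\<And>x. a \<le> Q x x"
    and irreducible: "irreducible_chain Q"
    and nontrivial: "\<exists>x y :: 'a. x \<noteq> y"
begin

lemma rtranclp_Q_pos: "(\<lambda>v w. Q v w > 0)\<^sup>*\<^sup>* x y"
  using irreducible Qpow_pos_imp_rtranclp[OF transition] by (meson irreducible_chain_def)

lemma exists_neighbour: obtains z where "z \<noteq> y" "Q y z > 0"
proof -
  obtain w :: 'a where "w \<noteq> y"
    using nontrivial by metis
  then obtain ws z where path: "rtrancl_path (\<lambda>v w. Q v w > 0) y (ws @ [z]) z"
    and "distinct (y # ws @ [z])" "set (y # ws) \<subseteq> {y}" "z \<notin> {y}"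
    using rtranclp_exit_path[OF rtranclp_Q_pos, of y "{y}" w] by blast
  then have "ws = []" "z \<noteq> y"
    by (auto simp: subset_singleton_iff)
  with path show thesis
    by (auto intro: that elim: rtrancl_path.cases)
qed

lemma a_lt_1: "a < 1" and pi_ge: "c / (1 - a) \<le> \<pi> y"
proof -
  obtain z where z: "z \<noteq> y" "Q y z > 0"
    by (rule exists_neighbour)
  have "Q y y + Q y z \<le> 1"
    using row_sum_le_1[of "{y, z}" y] z by simp
  then have c_le: "c \<le> \<pi> y * (1 - a)"
    using conductance_ge[of y z] z holding_ge[of y] pi_pos[of y]
    by (smt (verit) mult_left_mono)
  then show "a < 1"
    using c_pos pi_pos[of y] by (smt (verit) mult_nonneg_nonpos)
  with c_le show "c / (1 - a) \<le> \<pi> y"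
    by (simp add: pos_divide_le_eq)
qed

lemma inverse_pi_le: "1 / \<pi> y \<le> (1 - a) / c"
  using pi_ge[of y] a_lt_1 c_pos pi_pos[of y] by (simp add: field_simps)

lemma card_mult_le_sum_pi: "card S * (c / (1 - a)) \<le> sum \<pi> S"
  using pi_ge sum_mono[of S "\<lambda>_. c / (1 - a)" \<pi>] by simp

definition dirichlet :: "'a set \<Rightarrow> ('a \<Rightarrow> real) \<Rightarrow> real" where
  "dirichlet V f = (\<Sum>v\<in>V. \<Sum>w\<in>V. \<pi> v * Q v w * (f v - f w)^2)"

lemma dirichlet_term_nonneg: "0 \<le> \<pi> v * Q v w * (f v - f w)^2"
  using pi_pos[of v] Q_nonneg[of v w] by simp

lemma dirichlet_nonneg: "dirichlet V f \<ge> 0"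
  unfolding dirichlet_def using dirichlet_term_nonneg by (intro sum_nonneg)

lemma dirichlet_mono:
  assumes "finite C" "V \<subseteq> C"
  shows "dirichlet V f \<le> dirichlet C f"
proof -
  have "finite V"
    using assms finite_subset by blast
  then have "dirichlet V f \<le> (\<Sum>v\<in>V. \<Sum>w\<in>C. \<pi> v * Q v w * (f v - f w)^2)"
    unfolding dirichlet_def using assms dirichlet_term_nonneg by (intro sum_mono sum_mono2) auto
  also have "\<dots> \<le> dirichlet C f"
    unfolding dirichlet_def using assms dirichlet_term_nonneg by (intro sum_mono2 sum_nonneg) auto
  finally show ?thesis .
qed

lemma dirichlet_insert:
  assumes "finite V" "y \<notin> V"
  shows "dirichlet (insert y V) f = dirichlet V f + 2 * (\<Sum>w\<in>V. \<pi> y * Q y w * (f y - f w)^2)"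
proof -
  have "\<pi> v * Q v y * (f v - f y)^2 = \<pi> y * Q y v * (f y - f v)^2" for v
    by (simp add: detailed_balance power2_commute)
  then show ?thesis
    using assms by (simp add: dirichlet_def sum.distrib)
qed

lemma dirichlet_path_ge:
  assumes "rtrancl_path (\<lambda>v w. Q v w > 0) y ws z" "distinct (y # ws)"
  shows "2 * c * (\<Sum>(v, w)\<leftarrow>zip (y # ws) ws. (f v - f w)^2) \<le> dirichlet (set (y # ws)) f"
  using assms
proof (induction rule: rtrancl_path.induct)
  case (base y)
  then show ?case by (simp add: dirichlet_def)
next
  case (step x y ys z)
  have "c * (f x - f y)^2 \<le> \<pi> x * Q x y * (f x - f y)^2"
    using step.prems step.hyps(1) by (intro mult_right_mono conductance_ge) auto
  also have "\<dots> \<le> (\<Sum>w\<in>set (y # ys). \<pi> x * Q x w * (f x - f w)^2)"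
    using dirichlet_term_nonneg by (intro member_le_sum) auto
  finally have edge: "c * (f x - f y)^2 \<le> (\<Sum>w\<in>set (y # ys). \<pi> x * Q x w * (f x - f w)^2)" .
  have "dirichlet (set (x # y # ys)) f
      = dirichlet (set (y # ys)) f + 2 * (\<Sum>w\<in>set (y # ys). \<pi> x * Q x w * (f x - f w)^2)"
    using step.prems dirichlet_insert[of "set (y # ys)" x f] by simp
  moreover have "2 * c * (\<Sum>(v, w)\<leftarrow>zip (y # ys) ys. (f v - f w)^2) \<le> dirichlet (set (y # ys)) f"
    using step.IH step.prems by simp
  ultimately show ?case
    using edge by (simp only: zip_Cons_Cons list.map sum_list.Cons prod.case distrib_left)
qed

lemma exists_exit_oscillation:
  assumes "finite S" "y \<in> S" "S \<noteq> UNIV" "finite C" "nbhd S \<subseteq> C"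
  obtains w where "w \<notin> S" "2 * c * (f y - f w)^2 \<le> card S * dirichlet C f"
proof -
  obtain z where "z \<notin> S"
    using assms(3) by blast
  then obtain ws w where path: "rtrancl_path (\<lambda>v w. Q v w > 0) y (ws @ [w]) w"
    and dist: "distinct (y # ws @ [w])" and inside: "set (y # ws) \<subseteq> S" and "w \<notin> S"
    using rtranclp_exit_path[OF rtranclp_Q_pos assms(2)] by blast
  define E where "E = (\<Sum>(v, w)\<leftarrow>zip (y # ws @ [w]) (ws @ [w]). (f v - f w)^2)"
  have "Q (last (y # ws)) w > 0"
    using rtrancl_path_nth[OF path, of "length ws"] last_conv_nth[of "y # ws"]
      nth_append[of "y # ws" "[w]" "length ws"] by simp
  then have "w \<in> nbhd S"
    using inside last_in_set[of "y # ws"] by (auto simp: nbhd_def)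
  then have "set (y # ws @ [w]) \<subseteq> C"
    using inside assms(5) subset_nbhd[of S] by auto
  then have D_ge: "2 * c * E \<le> dirichlet C f"
    using order_trans[OF dirichlet_path_ge[OF path dist] dirichlet_mono[OF assms(4)]]
    unfolding E_def by blast
  have len_le: "length (ws @ [w]) \<le> card S"
    using dist card_mono[OF assms(1) inside] by (simp add: distinct_card)
  have "E \<ge> 0"
    unfolding E_def by (intro sum_list_nonneg) auto
  have "(f y - f w)^2 \<le> length (ws @ [w]) * E"
    using square_telescope_le[of f y "ws @ [w]"] by (simp add: E_def)
  then have "2 * c * (f y - f w)^2 \<le> length (ws @ [w]) * (2 * c * E)"
    using c_pos by (simp add: mult.left_commute)
  also have "\<dots> \<le> card S * dirichlet C f"
    using len_le D_ge c_pos \<open>E \<ge> 0\<close> by (intro mult_mono) auto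
  finally have "2 * c * (f y - f w)^2 \<le> card S * dirichlet C f" .
  with \<open>w \<notin> S\<close> show thesis
    by (rule that)
qed

lemma sum_pi_Q_square_le:
  assumes "finite C"
  shows "(\<Sum>y\<in>C. \<Sum>z\<in>C. \<pi> y * Q y z * (f z)^2) \<le> (\<Sum>z\<in>C. \<pi> z * (f z)^2)"
proof -
  have "(\<Sum>y\<in>C. \<Sum>z\<in>C. \<pi> y * Q y z * (f z)^2) = (\<Sum>z\<in>C. \<pi> z * (f z)^2 * sum (Q z) C)"
    by (subst sum.swap) (simp add: detailed_balance sum_distrib_left sum_distrib_right mult_ac)
  also have "\<dots> \<le> (\<Sum>z\<in>C. \<pi> z * (f z)^2)"
    using row_sum_le_1[OF assms] pi_pos by (intro sum_mono mult_left_le) (auto simp: less_imp_le)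
  finally show ?thesis .
qed

text \<open>The holding probabilities \<open>Q(y,y) \<ge> a\<close> turn the variance of \<open>f\<close> under each row of
  \<open>Q\<close> into a gain of \<open>a\<close> times the Dirichlet form.\<close>
lemma inner_pi_Qop_self_le:
  assumes "finite C" "supp f \<subseteq> C" "supp (Qop f) \<subseteq> C"
  shows "inner_pi (Qop f) (Qop f) \<le> inner_pi f f - a * dirichlet C f"
proof -
  let ?V = "\<lambda>y. (\<Sum>w\<in>C. Q y w * (f y - f w)^2)"
  have Qf: "Qop f y = (\<Sum>z\<in>C. Q y z * f z)" for y
    using assms(1,2) by (intro Qop_eq_sum) (auto simp: in_support_on)
  have "inner_pi (Qop f) (Qop f) = (\<Sum>y\<in>C. \<pi> y * (\<Sum>z\<in>C. Q y z * f z)^2)"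
    using inner_pi_eq_sum[OF assms(1,3)] by (simp add: Qf power2_eq_square mult_ac)
  also have "\<dots> \<le> (\<Sum>y\<in>C. \<pi> y * ((\<Sum>z\<in>C. Q y z * (f z)^2) - Q y y * ?V y))"
    using sum_weighted_square_le[OF assms(1) _ Q_nonneg row_sum_le_1[OF assms(1)]] pi_pos
    by (intro sum_mono mult_left_mono) (auto simp: less_imp_le)
  also have "\<dots> = (\<Sum>y\<in>C. \<Sum>z\<in>C. \<pi> y * Q y z * (f z)^2) - (\<Sum>y\<in>C. Q y y * (\<pi> y * ?V y))"
    by (simp add: sum_subtractf right_diff_distrib sum_distrib_left mult_ac)
  also have "\<dots> \<le> inner_pi f f - a * dirichlet C f"
  proof -
    have "(\<Sum>y\<in>C. \<Sum>z\<in>C. \<pi> y * Q y z * (f z)^2) \<le> (\<Sum>z\<in>C. \<pi> z * (f z)^2)"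
      by (rule sum_pi_Q_square_le[OF assms(1)])
    also have "\<dots> = inner_pi f f"
      using inner_pi_eq_sum[OF assms(1,2), of f] by (simp add: power2_eq_square mult.assoc)
    finally have "(\<Sum>y\<in>C. \<Sum>z\<in>C. \<pi> y * Q y z * (f z)^2) \<le> inner_pi f f" .
    moreover have "a * dirichlet C f = (\<Sum>y\<in>C. a * (\<pi> y * ?V y))"
      by (simp add: dirichlet_def sum_distrib_left mult_ac)
    moreover have "\<dots> \<le> (\<Sum>y\<in>C. Q y y * (\<pi> y * ?V y))"
      using holding_ge pi_pos Q_nonneg
      by (intro sum_mono mult_right_mono mult_nonneg_nonneg sum_nonneg) (auto simp: less_imp_le)
    ultimately show ?thesis by linarith
  qed
  finally show ?thesis .
qed

definition nash_const :: real where
  "nash_const = 8 * a * c^2 / (27 * (1 - a))"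

lemma nash_const_pos: "nash_const > 0"
  using a_pos a_lt_1 c_pos by (simp add: nash_const_def)

lemma card_superlevel_le:
  assumes fin: "finite (supp f)" and nonneg: "\<And>y. f y \<ge> 0" and mass: "mass f = 1"
    and "M > 0"
  shows "card {y. 3 * f y > M} * (c * M) \<le> 3 * (1 - a)"
proof -
  define S where "S = {y. 3 * f y > M}"
  have "S \<subseteq> supp f"
    using \<open>M > 0\<close> nonneg by (auto simp: S_def in_support_on)
  have "card S * (c / (1 - a)) * (M / 3) \<le> (\<Sum>y\<in>S. \<pi> y) * (M / 3)"
    using card_mult_le_sum_pi \<open>M > 0\<close> by (intro mult_right_mono) auto
  also have "\<dots> \<le> (\<Sum>y\<in>S. \<pi> y * f y)"
    unfolding sum_distrib_right using pi_pos by (intro sum_mono) (auto simp: S_def)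
  also have "\<dots> \<le> 1"
    using sum_pi_le_mass[OF fin nonneg \<open>S \<subseteq> supp f\<close>] mass by simp
  finally show ?thesis
    using a_lt_1 by (simp add: S_def field_simps)
qed

text \<open>On a path from a maximum point \<open>y0\<close> of \<open>f\<close> out of the superlevel set \<open>{3f > f y0}\<close>,
  \<open>f\<close> drops by at least \<open>2 f y0 / 3\<close>, and the path is no longer than that set is large.\<close>
lemma nash_dirichlet_ge:
  assumes fin: "finite (supp f)" and nonneg: "\<And>y. f y \<ge> 0" and mass: "mass f = 1"
    and max: "\<And>y. f y \<le> f y0" and low: "3 * f z \<le> f y0"
  shows "nash_const * (f y0)^3 \<le> a * dirichlet (nbhd (supp f)) f"
proof -
  define M where "M = f y0"
  define S where "S = {y. 3 * f y > M}"
  define C where "C = nbhd (supp f)"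
  have "M > 0"
    using mass_nonzero[OF mass] nonneg max by (metis M_def order_le_less order.strict_trans2)
  then have "S \<subseteq> supp f"
    using nonneg by (auto simp: S_def in_support_on)
  then have "finite S" "nbhd S \<subseteq> C"
    using fin finite_subset nbhd_mono by (auto simp: C_def)
  moreover have "y0 \<in> S" "z \<notin> S" "finite C"
    using \<open>M > 0\<close> low fin by (auto simp: S_def M_def C_def finite_nbhd)
  ultimately obtain w where "w \<notin> S" and osc: "2 * c * (M - f w)^2 \<le> card S * dirichlet C f"
    using exists_exit_oscillation[of S y0 C f] unfolding M_def by blast
  have "(2 * M / 3)^2 \<le> (M - f w)^2"
    using \<open>w \<notin> S\<close> \<open>M > 0\<close> by (intro power_mono) (auto simp: S_def)
  then have "2 * c * (2 * M / 3)^2 \<le> card S * dirichlet C f"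
    using c_pos by (intro order_trans[OF _ osc] mult_left_mono) auto
  then have "2 * c * (2 * M / 3)^2 * (c * M) \<le> card S * dirichlet C f * (c * M)"
    using c_pos \<open>M > 0\<close> by (intro mult_right_mono) auto
  also have "\<dots> = card S * (c * M) * dirichlet C f"
    by (simp add: mult_ac)
  also have "\<dots> \<le> 3 * (1 - a) * dirichlet C f"
    using card_superlevel_le[OF fin nonneg mass \<open>M > 0\<close>] dirichlet_nonneg
    unfolding S_def by (rule mult_right_mono)
  finally have "8 * c^2 * M^3 \<le> 27 * (1 - a) * dirichlet C f"
    by (simp add: field_simps power3_eq_cube power2_eq_square)
  then have "a * (8 * c^2 * M^3) \<le> a * (27 * (1 - a) * dirichlet C f)"
    using a_pos by simp
  then show ?thesis
    using a_lt_1 by (simp add: nash_const_def M_def C_def field_simps)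
qed

lemma nash_inequality:
  assumes fin: "finite (supp f)" and nonneg: "\<And>y. f y \<ge> 0" and mass: "mass f = 1"
    and max: "\<And>y. f y \<le> f y0" and low: "3 * f z \<le> f y0"
  shows "inner_pi (Qop f) (Qop f) \<le> inner_pi f f - nash_const * (inner_pi f f)^3"
proof -
  have "nash_const * (inner_pi f f)^3 \<le> nash_const * (f y0)^3"
    using inner_pi_le_mass[of f "f y0", OF nonneg max] mass inner_pi_self_nonneg nash_const_pos
    by (intro mult_left_mono power_mono) auto
  moreover have "inner_pi (Qop f) (Qop f) \<le> inner_pi f f - a * dirichlet (nbhd (supp f)) f"
    using fin by (intro inner_pi_Qop_self_le) (auto simp: finite_nbhd subset_nbhd supp_Qop_subset)
  ultimately show ?thesis
    using nash_dirichlet_ge[OF assms] by linarith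
qed

definition heat_norm :: "'a \<Rightarrow> nat \<Rightarrow> real" where
  "heat_norm x k = inner_pi (heat x k) (heat x k)"

lemma heat_norm_eq: "heat_norm x k = Qpow Q (2 * k) x x / \<pi> x"
  using inner_pi_heat[of x k k] by (simp add: heat_norm_def mult_2)

lemma heat_norm_pos: "heat_norm x k > 0"
  using mass_nonzero[OF mass_heat] inner_pi_self_pos[OF finite_supp_heat]
  by (metis heat_norm_def)

lemma heat_norm_Suc_le: "heat_norm x (Suc k) \<le> heat_norm x k"
proof -
  have "heat_norm x (Suc k) \<le> heat_norm x k - a * dirichlet (nbhd (supp (heat x k))) (heat x k)"
    unfolding heat_norm_def heat_Suc using finite_supp_heat
    by (intro inner_pi_Qop_self_le) (auto simp: finite_nbhd subset_nbhd supp_Qop_subset)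
  moreover have "0 \<le> a * dirichlet (nbhd (supp (heat x k))) (heat x k)"
    using a_pos dirichlet_nonneg by simp
  ultimately show ?thesis
    by linarith
qed

lemma heat_norm_le: "heat_norm x k \<le> 1 / \<pi> x"
proof (induction k)
  case 0
  then show ?case by (simp add: heat_norm_eq)
next
  case (Suc k)
  then show ?case using heat_norm_Suc_le[of x k] by linarith
qed

lemma return_ratio_le_heat_norm: "Qpow Q m x x / \<pi> x \<le> heat_norm x (m div 2)"
proof (cases "even m")
  case True
  then show ?thesis by (simp add: heat_norm_eq)
next
  case False
  define k where "k = m div 2"
  have "m = k + Suc k"
    using False unfolding k_def by presburger
  then have "2 * (Qpow Q m x x / \<pi> x) \<le> heat_norm x k + heat_norm x (Suc k)"
    using two_inner_pi_le[OF finite_supp_heat finite_supp_heat, of x k x "Suc k"]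
    by (simp add: inner_pi_heat heat_norm_def)
  then show ?thesis
    using heat_norm_Suc_le[of x k] by (simp add: k_def)
qed

lemma heat_norm_nash_step:
  assumes "\<And>M. (\<And>y. heat x k y \<le> M) \<Longrightarrow> \<exists>z. 3 * heat x k z \<le> M"
  shows "heat_norm x (Suc k) \<le> heat_norm x k - nash_const * (heat_norm x k)^3"
proof -
  obtain y0 where max: "\<And>y. heat x k y \<le> heat x k y0"
    using exists_max_finite_supp[OF finite_supp_heat] by blast
  then obtain z where "3 * heat x k z \<le> heat x k y0"
    using assms by blast
  from nash_inequality[OF finite_supp_heat heat_nonneg mass_heat max this]
  show ?thesis
    by (simp add: heat_norm_def heat_Suc)
qed

text \<open>The recursion alone gives the bound only for \<open>k \<ge> 6\<close>; for smaller \<open>k\<close> the trivial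
  bound \<open>N \<le> (1 - a)/c\<close> suffices.\<close>
lemma nash_decay_arith:
  fixes k :: nat
  assumes "0 < N" "N \<le> (1 - a) / c" "2 * nash_const * k \<le> 1 / N^2"
  shows "N * (a * c * sqrt (2 * k + 2)) \<le> 1"
proof -
  note a_quarter = mult_one_minus_le_quarter[of a]
  show ?thesis
  proof (cases "k \<le> 5")
    case True
    then have "sqrt (2 * k + 2) \<le> sqrt 16"
      by (intro real_sqrt_le_mono) simp
    then have "sqrt (2 * k + 2) \<le> 4"
      by simp
    have "N * (a * c * sqrt (2 * k + 2)) \<le> (1 - a) / c * (a * c * 4)"
      using assms a_pos c_pos \<open>sqrt (2 * k + 2) \<le> 4\<close> by (intro mult_mono) auto
    also have "\<dots> = 4 * (a * (1 - a))"
      using c_pos by simp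
    finally show ?thesis
      using a_quarter by simp
  next
    case False
    have "27 * (a * (1 - a)) * (2 * k + 2) \<le> 27 * (1 / 4) * (2 * k + 2)"
      using a_quarter by (intro mult_right_mono) auto
    also have "\<dots> \<le> 16 * k"
      using False by simp
    finally have le_16k: "27 * (a * (1 - a)) * (2 * k + 2) \<le> 16 * k" .
    have "a^2 * c^2 * (2 * k + 2) = a * c^2 / (27 * (1 - a)) * (27 * (a * (1 - a)) * (2 * k + 2))"
      using a_lt_1 by (simp add: field_simps power2_eq_square)
    also have "\<dots> \<le> a * c^2 / (27 * (1 - a)) * (16 * k)"
      using le_16k a_pos a_lt_1 by (intro mult_left_mono) auto
    also have "\<dots> = 2 * nash_const * k"
      by (simp add: nash_const_def)
    finally have "a^2 * c^2 * (2 * k + 2) \<le> 2 * nash_const * k" .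
    then have "(N * (a * c * sqrt (2 * k + 2)))^2 \<le> N^2 * (2 * nash_const * k)"
      by (simp add: power_mult_distrib mult_left_mono)
    also have "\<dots> \<le> 1^2"
      using assms by (simp add: field_simps)
    finally show ?thesis
      by (rule power2_le_imp_le) simp
  qed
qed

lemma heat_norm_nash_bound:
  assumes "\<And>j. j < k \<Longrightarrow> heat_norm x (Suc j) \<le> heat_norm x j - nash_const * (heat_norm x j)^3"
  shows "heat_norm x k * (a * c * sqrt (2 * k + 2)) \<le> 1"
proof (rule nash_decay_arith)
  show "heat_norm x k \<le> (1 - a) / c"
    using heat_norm_le[of x k] inverse_pi_le[of x] by linarith
  show "2 * nash_const * k \<le> 1 / (heat_norm x k)^2"
    using nash_const_pos heat_norm_pos assms by (rule cubic_decrease_inverse_square)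
qed (rule heat_norm_pos)

lemma return_ratio_le_of_heat_norm:
  assumes "heat_norm x (m div 2) * (a * c * sqrt (2 * (m div 2) + 2)) \<le> 1"
  shows "Qpow Q m x x / \<pi> x \<le> 1 / (a * c * sqrt (real m + 1))"
proof -
  have "sqrt (real m + 1) \<le> sqrt (2 * (m div 2) + 2)"
    by (intro real_sqrt_le_mono) linarith
  then have "heat_norm x (m div 2) * (a * c * sqrt (real m + 1))
      \<le> heat_norm x (m div 2) * (a * c * sqrt (2 * (m div 2) + 2))"
    using heat_norm_pos[of x "m div 2"] a_pos c_pos by (intro mult_left_mono) auto
  with assms have "heat_norm x (m div 2) * (a * c * sqrt (real m + 1)) \<le> 1"
    by linarith
  then have "heat_norm x (m div 2) \<le> 1 / (a * c * sqrt (real m + 1))"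
    using a_pos c_pos by (simp add: field_simps)
  then show ?thesis
    using return_ratio_le_heat_norm[of m x] by linarith
qed

theorem return_ratio_le_infinite:
  assumes "infinite (UNIV :: 'a set)"
  shows "Qpow Q m x x / \<pi> x \<le> 1 / (a * c * sqrt (real m + 1))"
proof (intro return_ratio_le_of_heat_norm heat_norm_nash_bound heat_norm_nash_step)
  fix j M assume "\<And>y. heat x j y \<le> M"
  obtain z where "z \<notin> supp (heat x j)"
    using ex_new_if_finite[OF assms finite_supp_heat] by blast
  then have "3 * heat x j z \<le> M"
    using \<open>\<And>y. heat x j y \<le> M\<close>[of z] by (simp add: in_support_on)
  then show "\<exists>z. 3 * heat x j z \<le> M" ..
qed

end

section \<open>Finite state spaces: the spectral gap\<close>

locale normalized_lazy_chain = lazy_irreducible_chain +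
  assumes finite_states: "finite (UNIV :: 'a set)"
    and pi_sum_1: "sum \<pi> UNIV = 1"
begin

lemma finite_supp: "finite (supp (f :: 'a \<Rightarrow> real))"
  using finite_subset[OF subset_UNIV finite_states] .

lemma inner_pi_UNIV: "inner_pi f g = (\<Sum>y\<in>UNIV. \<pi> y * f y * g y)"
  using finite_states by (rule inner_pi_eq_sum) simp

lemma inner_pi_minus_1:
  assumes "mass f = 1" "mass g = 1"
  shows "inner_pi f g - 1 = inner_pi (\<lambda>y. f y - 1) (\<lambda>y. g y - 1)"
proof -
  have "inner_pi (\<lambda>y. f y - 1) (\<lambda>y. g y - 1)
      = inner_pi f g - mass f - mass g + sum \<pi> UNIV"
    unfolding mass_def inner_pi_UNIV
    by (simp add: algebra_simps sum.distrib sum_subtractf)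
  then show ?thesis
    using assms pi_sum_1 by simp
qed

lemma inner_pi_self_ge_1: "mass f = 1 \<Longrightarrow> inner_pi f f \<ge> 1"
  using inner_pi_minus_1[of f f] inner_pi_self_nonneg[of "\<lambda>y. f y - 1"] by simp

lemma abs_inner_pi_minus_1_le:
  assumes "mass f = 1" "mass g = 1"
  shows "\<bar>inner_pi f g - 1\<bar> \<le> ((inner_pi f f - 1) + (inner_pi g g - 1)) / 2"
  using abs_inner_pi_le[OF finite_supp finite_supp, of "\<lambda>y. f y - 1" "\<lambda>y. g y - 1"]
  by (simp add: inner_pi_minus_1 assms)

lemma c_le_1: "c \<le> 1"
proof -
  fix x :: 'a
  obtain z where z: "z \<noteq> x" "Q x z > 0"
    by (rule exists_neighbour)
  have "\<pi> x \<le> 1"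
    using pi_sum_1 member_le_sum[of x UNIV \<pi>] finite_states pi_pos by (simp add: less_imp_le)
  moreover have "Q x z \<le> 1"
    using row_sum_le_1[of "{z}" x] by simp
  ultimately have "\<pi> x * Q x z \<le> 1 * 1"
    using z Q_nonneg by (intro mult_mono) auto
  then show ?thesis
    using conductance_ge[of x z] z by simp
qed

lemma card_UNIV_mult_c_le: "card (UNIV :: 'a set) * c \<le> 1 - a"
  using card_mult_le_sum_pi[of UNIV] pi_sum_1 a_lt_1 by (simp add: field_simps)

text \<open>A path from \<open>y\<close> to \<open>z\<close> has at most as many edges as there are states, that is at
  most \<open>(1 - a)/c\<close> since each state has \<open>\<pi>\<close>-mass at least \<open>c/(1 - a)\<close>.\<close>
lemma two_point_poincare: "2 * c^2 * (f y - f z)^2 \<le> (1 - a) * dirichlet UNIV f"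
proof (cases "y = z")
  case True
  then show ?thesis
    using a_lt_1 dirichlet_nonneg by simp
next
  case False
  then obtain w where "w \<notin> - {z}"
    and osc: "2 * c * (f y - f w)^2 \<le> card (- {z}) * dirichlet UNIV f"
    using exists_exit_oscillation[of "- {z}" y UNIV f] finite_states by auto
  have "card (- {z}) \<le> card (UNIV :: 'a set)"
    using finite_states by (rule card_mono) simp
  then have "card (- {z}) * dirichlet UNIV f \<le> card (UNIV :: 'a set) * dirichlet UNIV f"
    using dirichlet_nonneg by (intro mult_right_mono) auto
  with osc \<open>w \<notin> - {z}\<close>
  have "2 * c * (f y - f z)^2 * c \<le> card (UNIV :: 'a set) * dirichlet UNIV f * c"
    using c_pos by (intro mult_right_mono) auto
  also have "\<dots> = card (UNIV :: 'a set) * c * dirichlet UNIV f"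
    by (simp add: mult_ac)
  also have "\<dots> \<le> (1 - a) * dirichlet UNIV f"
    using card_UNIV_mult_c_le dirichlet_nonneg by (rule mult_right_mono)
  finally show ?thesis
    by (simp add: power2_eq_square mult_ac)
qed

definition gap_const :: real where
  "gap_const = 2 * a * c^2 / (1 - a)"

lemma gap_inequality:
  assumes nonneg: "\<And>y. f y \<ge> 0" and mass: "mass f = 1"
  shows "inner_pi (Qop f) (Qop f) - 1 \<le> (inner_pi f f - 1) - gap_const * (inner_pi f f - 1)^2"
proof -
  obtain ymax where max: "\<And>y. f y \<le> f ymax"
    using exists_max_finite_supp[OF finite_supp] by blast
  obtain ymin where min: "\<And>y. f ymin \<le> f y"
    using exists_max_finite_supp[OF finite_supp, of "\<lambda>y. - f y"] by auto
  have "f ymin = (\<Sum>y\<in>UNIV. \<pi> y * f ymin)"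
    using pi_sum_1 by (simp add: sum_distrib_right[symmetric])
  also have "\<dots> \<le> mass f"
    unfolding mass_def inner_pi_UNIV using min pi_pos by (intro sum_mono) (simp add: less_imp_le)
  finally have "inner_pi f f - 1 \<le> f ymax - f ymin"
    using inner_pi_le_mass[of f "f ymax", OF nonneg max] mass by simp
  then have "gap_const * (inner_pi f f - 1)^2 \<le> gap_const * (f ymax - f ymin)^2"
    using inner_pi_self_ge_1[OF mass] a_pos a_lt_1
    by (intro mult_left_mono power_mono) (auto simp: gap_const_def)
  also have "\<dots> \<le> a * dirichlet UNIV f"
  proof -
    have "a * (2 * c^2 * (f ymax - f ymin)^2) \<le> a * ((1 - a) * dirichlet UNIV f)"
      using two_point_poincare[of f ymax ymin] a_pos by (simp add: mult.assoc)
    then show ?thesis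
      using a_lt_1 by (simp add: gap_const_def field_simps)
  qed
  also have "a * dirichlet UNIV f \<le> inner_pi f f - inner_pi (Qop f) (Qop f)"
    using inner_pi_Qop_self_le[of UNIV f] finite_states by simp
  finally show ?thesis
    by simp
qed

lemma heat_norm_antimono: "j \<le> k \<Longrightarrow> heat_norm x k \<le> heat_norm x j"
  using decseq_SucI[of "heat_norm x", OF heat_norm_Suc_le] by (simp add: decseqD)

lemma abs_return_ratio_minus_1_le: "\<bar>Qpow Q m x x / \<pi> x - 1\<bar> \<le> heat_norm x (m div 2) - 1"
proof (cases "even m")
  case True
  then have "Qpow Q m x x / \<pi> x = heat_norm x (m div 2)"
    by (simp add: heat_norm_eq)
  then show ?thesis
    using inner_pi_self_ge_1[OF mass_heat, of x "m div 2"] by (simp add: heat_norm_def)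
next
  case False
  define k where "k = m div 2"
  have "m = k + Suc k"
    using False unfolding k_def by presburger
  then have "\<bar>Qpow Q m x x / \<pi> x - 1\<bar> \<le> ((heat_norm x k - 1) + (heat_norm x (Suc k) - 1)) / 2"
    using abs_inner_pi_minus_1_le[OF mass_heat mass_heat, of x k x "Suc k"]
    by (simp add: inner_pi_heat heat_norm_def)
  then show ?thesis
    using heat_norm_Suc_le[of x k] by (simp add: k_def)
qed

lemma heat_norm_gap_bound:
  "(heat_norm x k - 1) * (c / (1 - a) + gap_const * k) \<le> 1"
proof (rule quadratic_decrease_inverse)
  show "gap_const \<ge> 0" "c / (1 - a) > 0"
    using a_pos a_lt_1 c_pos by (simp_all add: gap_const_def)
  show "heat_norm x j - 1 \<ge> 0" for j
    using inner_pi_self_ge_1[OF mass_heat] by (simp add: heat_norm_def)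
  show "heat_norm x (Suc j) - 1 \<le> (heat_norm x j - 1) - gap_const * (heat_norm x j - 1)^2" for j
    using gap_inequality[OF heat_nonneg mass_heat] by (simp add: heat_norm_def heat_Suc)
  have "heat_norm x 0 - 1 \<le> (1 - a) / c"
    using heat_norm_le[of x 0] inverse_pi_le[of x] by linarith
  then show "(heat_norm x 0 - 1) * (c / (1 - a)) \<le> 1"
    using a_lt_1 c_pos by (simp add: field_simps)
qed

lemma gap_decay_arith:
  fixes m :: nat
  shows "2 * a^2 * c^2 * (real m + 1) \<le> c / (1 - a) + gap_const * (m div 2)"
proof -
  have "4 * a^2 * c^2 * (1 - a) = 4 * (a * (1 - a)) * (a * c * c)"
    by (simp add: power2_eq_square algebra_simps)
  also have "\<dots> \<le> 1 * (a * c * c)"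
    using mult_one_minus_le_quarter[of a] a_pos c_pos by (intro mult_right_mono) auto
  finally have quarter: "4 * a^2 * c^2 * (1 - a) \<le> a * c * c"
    by simp
  have "a * c * c \<le> 1 * c"
    using a_pos a_lt_1 c_pos c_le_1 by (intro mult_right_mono mult_le_one) auto
  with quarter have "4 * a^2 * c^2 \<le> c / (1 - a)"
    using a_lt_1 by (simp add: field_simps)
  moreover have "4 * a^2 * c^2 \<le> gap_const"
  proof -
    have "4 * a^2 * c^2 * (1 - a) \<le> 2 * a * c^2"
      using quarter a_pos c_pos by (simp add: power2_eq_square)
    then show ?thesis
      using a_lt_1 by (simp add: gap_const_def field_simps)
  qed
  then have "4 * a^2 * c^2 * (m div 2) \<le> gap_const * (m div 2)"
    by (intro mult_right_mono) auto
  moreover have "2 * a^2 * c^2 * (real m + 1) \<le> 2 * a^2 * c^2 * (2 * (m div 2) + 2)"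
    by (intro mult_left_mono) (linarith, simp)
  ultimately show ?thesis
    by (simp add: algebra_simps)
qed

lemma exists_low_point:
  assumes "\<And>y. f y \<ge> 0" "mass f = 1" "inner_pi f f \<ge> 3" "\<And>y. f y \<le> M"
  shows "\<exists>z. 3 * f z \<le> M"
proof (rule ccontr)
  assume "\<nexists>z. 3 * f z \<le> M"
  then have "M < 3 * f y" for y
    by (simp add: not_le)
  then have "M / 3 * sum \<pi> UNIV < (\<Sum>y\<in>UNIV. \<pi> y * f y * 1)"
    unfolding sum_distrib_left using pi_pos finite_states
    by (intro sum_strict_mono) (auto simp: mult.commute)
  then have "M < 3"
    using assms(2) pi_sum_1 by (simp add: mass_def inner_pi_UNIV)
  then show False
    using inner_pi_le_mass[of f M] assms by simp
qed

lemma return_ratio_le_nash_finite: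
  assumes "heat_norm x (m div 2) \<ge> 3"
  shows "Qpow Q m x x / \<pi> x \<le> 1 / (a * c * sqrt (real m + 1))"
proof (intro return_ratio_le_of_heat_norm heat_norm_nash_bound heat_norm_nash_step)
  fix j M assume "j < m div 2" "\<And>y. heat x j y \<le> M"
  moreover have "inner_pi (heat x j) (heat x j) \<ge> 3"
    using assms heat_norm_antimono[of j "m div 2" x] \<open>j < m div 2\<close> by (simp add: heat_norm_def)
  ultimately show "\<exists>z. 3 * heat x j z \<le> M"
    using exists_low_point[OF heat_nonneg mass_heat] by blast
qed

lemma return_ratio_gap_bound:
  "\<bar>Qpow Q m x x / \<pi> x - 1\<bar> \<le> 1 / (2 * a^2 * c^2 * (real m + 1))"
proof -
  define G where "G = heat_norm x (m div 2) - 1"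
  have dev: "\<bar>Qpow Q m x x / \<pi> x - 1\<bar> \<le> G"
    unfolding G_def by (rule abs_return_ratio_minus_1_le)
  then have "G \<ge> 0"
    by linarith
  then have "G * (2 * a^2 * c^2 * (real m + 1)) \<le> 1"
    using heat_norm_gap_bound[of x "m div 2"] mult_left_mono[OF gap_decay_arith[of m]]
    unfolding G_def by (meson order_trans)
  moreover have "2 * a^2 * c^2 * (real m + 1) > 0"
    using a_pos c_pos by simp
  ultimately have "G \<le> 1 / (2 * a^2 * c^2 * (real m + 1))"
    by (simp add: pos_le_divide_eq)
  with dev show ?thesis
    by linarith
qed

text \<open>If \<open>B = 1/(a c \<surd>(m + 1)) \<le> 2\<close>, the bound \<open>B\<close> follows from the spectral-gap bound \<open>B\<^sup>2/2\<close>;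
  otherwise it is trivial unless \<open>heat_norm x (m div 2) \<ge> 3\<close>, where the Nash argument applies.\<close>
theorem return_ratio_finite:
  "\<bar>Qpow Q m x x / \<pi> x - 1\<bar>
     \<le> min (1 / (a * c * sqrt (real m + 1))) (1 / (2 * a^2 * c^2 * (real m + 1)))"
proof -
  define q where "q = Qpow Q m x x / \<pi> x"
  define B where "B = 1 / (a * c * sqrt (real m + 1))"
  have gap: "\<bar>q - 1\<bar> \<le> 1 / (2 * a^2 * c^2 * (real m + 1))"
    unfolding q_def by (rule return_ratio_gap_bound)
  have "B \<ge> 0"
    using a_pos c_pos by (simp add: B_def)
  have "\<bar>q - 1\<bar> \<le> B"
  proof (cases "B \<le> 2")
    case True
    have "1 / (2 * a^2 * c^2 * (real m + 1)) = B * (B / 2)"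
      using a_pos c_pos by (simp add: B_def power2_eq_square field_simps)
    also have "\<dots> \<le> B"
      using True \<open>B \<ge> 0\<close> by (intro mult_left_le) simp_all
    finally show ?thesis
      using gap by linarith
  next
    case False
    have "q \<ge> 0"
      using Qpow_nonneg[OF transition] pi_pos[of x] by (simp add: q_def)
    moreover have "q \<le> B" if "heat_norm x (m div 2) \<ge> 3"
      using return_ratio_le_nash_finite[OF that] by (simp add: q_def B_def)
    moreover have "\<bar>q - 1\<bar> \<le> heat_norm x (m div 2) - 1"
      unfolding q_def by (rule abs_return_ratio_minus_1_le)
    ultimately show ?thesis
      using False by (cases "heat_norm x (m div 2) \<ge> 3") (auto simp: abs_le_iff)
  qed
  with gap show ?thesis
    by (simp add: q_def B_def)
qed

end

context lazy_irreducible_chain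
begin

theorem return_ratio_summable:
  assumes "\<pi> summable_on UNIV" "(\<Sum>\<^sub>\<infinity>y. \<pi> y) = 1"
  shows "\<bar>Qpow Q m x x / \<pi> x - 1\<bar>
           \<le> min (1 / (a * c * sqrt (real m + 1))) (1 / (2 * a^2 * c^2 * (real m + 1)))"
proof -
  have "finite (UNIV :: 'a set)"
    using finite_if_summable_on_bounded_below[OF assms(1)] pi_ge a_lt_1 c_pos
    by (metis divide_pos_pos diff_gt_0_iff_gt)
  moreover have "sum \<pi> UNIV = 1"
    using assms(2) infsum_finite[OF \<open>finite (UNIV :: 'a set)\<close>, of \<pi>] by simp
  ultimately interpret normalized_lazy_chain Q \<pi> c a
    by unfold_locales
  show ?thesis
    by (rule return_ratio_finite)
qed

end

lemma return_ratio_single_state: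
  fixes Q :: "'a \<Rightarrow> 'a \<Rightarrow> real" and \<pi> :: "'a \<Rightarrow> real"
  assumes "transition_matrix Q" "UNIV = {x}" "\<pi> summable_on UNIV \<Longrightarrow> (\<Sum>\<^sub>\<infinity>y. \<pi> y) = 1"
  shows "\<pi> summable_on UNIV" "Qpow Q k x x / \<pi> x = 1"
proof -
  show "\<pi> summable_on UNIV"
    using assms(2) by (metis finite.emptyI finite_insert summable_on_finite)
  moreover have "\<pi> x = (\<Sum>\<^sub>\<infinity>y. \<pi> y)"
    by (subst assms(2)) simp
  ultimately show "Qpow Q k x x / \<pi> x = 1"
    using assms(3) Qpow_single_state[OF assms(1,2)] by simp
qed

lemma Inf_edge_weight_le:
  fixes Q :: "'a \<Rightarrow> 'a \<Rightarrow> real" and \<pi> :: "'a \<Rightarrow> real"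
  assumes "\<And>x. \<pi> x > 0" "x \<noteq> y" "Q x y > 0"
  shows "Inf {\<pi> x * Q x y | x y. x \<noteq> y \<and> Q x y > 0} \<le> \<pi> x * Q x y"
  by (rule cInf_lower) (use assms in \<open>auto intro!: bdd_belowI[of _ 0] mult_nonneg_nonneg less_imp_le\<close>)

lemma Inf_holding_le: "transition_matrix Q \<Longrightarrow> Inf (range (\<lambda>x. Q x x)) \<le> Q y y"
  by (rule cInf_lower) (auto simp: transition_matrix_def intro!: bdd_belowI[of _ 0])

theorem lemma3p6:
  fixes Q :: "'a::countable \<Rightarrow> 'a \<Rightarrow> real" and \<pi> :: "'a \<Rightarrow> real"
  assumes "transition_matrix Q"
    and "irreducible_chain Q"
    and "\<And>x. \<pi> x > 0"
    and "reversible Q \<pi>"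
    and "\<pi> summable_on UNIV \<Longrightarrow> (\<Sum>\<^sub>\<infinity>x. \<pi> x) = 1"
    and "c = Inf {\<pi> x * Q x y | x y. x \<noteq> y \<and> Q x y > 0}" and "c > 0"
    and "a = Inf (range (\<lambda>x. Q x x))" and "a > 0"
  shows "\<forall>x k. (\<pi> summable_on UNIV \<longrightarrow>
             \<bar>Qpow Q k x x / \<pi> x - 1\<bar>
               \<le> min (1 / (a * c * sqrt (real k + 1))) (1 / (2 * a^2 * c^2 * (real k + 1))))
           \<and> (\<not> \<pi> summable_on UNIV \<longrightarrow> Qpow Q k x x / \<pi> x \<le> 1 / (a * c * sqrt (real k + 1)))"
proof (cases "\<exists>x y :: 'a. x \<noteq> y")
  case True
  interpret lazy_irreducible_chain Q \<pi> c a
    using assms True Inf_edge_weight_le[of \<pi>] Inf_holding_le[of Q] by unfold_locales auto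
  show ?thesis
    using return_ratio_summable assms(5) return_ratio_le_infinite summable_on_finite by blast
next
  case False
  then have "UNIV = {x}" for x :: 'a
    by blast
  then show ?thesis
    using return_ratio_single_state[OF assms(1) _ assms(5)] assms(7,9) by simp
qed

end
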